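(* Let $A\in\mathbb{C}^{m\times n}$ and $B\in\mathbb{C}^{n\times p}$. Then each of the following sets of matrices is contained in $\{(AB)^{(1,2)}\}$: $$\{(A^{(1,2)}AB)^{(1,2)}A^{(1,2)}\},\quad \{B^{(1,2)}(ABB^{(1,2)})^{(1,2)}\},\quad \{(A^{*}AB)^{(1,2)}A^{*}\},\quad \{B^{*}(ABB^{*})^{(1,2)}\},\quad \{(AA^{*}AB)^{(1,2)}AA^{*}\},$$ $$\{B^{*}B(ABB^{*}B)^{(1,2)}\},\quad \{B^{(1,2)}(A^{(1,2)}ABB^{(1,2)})^{(1,2)}A^{(1,2)}\},\quad \{B^{*}(A^{*}ABB^{*})^{(1,2)}A^{*}\},\quad \{B^{*}B(AA^{*}ABB^{*}B)^{(1,2)}AA^{*}\}.$$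
   Context: For a complex matrix $X$, $X^*$ is its conjugate transpose, $r(X)$ its rank and $\mathscr{R}(X)$ its column space. For $X\in\mathbb{C}^{p\times q}$, a matrix $G\in\mathbb{C}^{q\times p}$ is called an $\{i,\ldots,j\}$-generalized inverse of $X$ (written $X^{(i,\ldots,j)}$) if it satisfies the equations numbered $i,\ldots,j$ among the four Penrose equations (i) $XGX=X$, (ii) $GXG=G$, (iii) $(XG)^*=XG$, (iv) $(GX)^*=GX$; $\{X^{(i,\ldots,j)}\}$ denotes the set of all such $G$. The Moore–Penrose inverse $X^\dagger$ is the unique matrix satisfying all four equations. For a matrix expression involving generalized inverses, $\{\cdot\}$ denotes the set of all values of the expression as each generalized inverse occurring in it ranges over all admissible choices; repeated occurrences of the same symbol (e.g. $A^{(1)}$ appearing twice) denote one and the same choice, and a generalized inverse of a matrix that itself contains a chosen generalized inverse is taken with respect to that chosen matrix. *)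

theory Defs
  imports "Jordan_Normal_Form.Schur_Decomposition"
begin

definition gi12 :: "complex mat \<Rightarrow> complex mat set" where
  "gi12 X = {G. G \<in> carrier_mat (dim_col X) (dim_row X) \<and> X * G * X = X \<and> G * X * G = G}"

abbreviation ct :: "complex mat \<Rightarrow> complex mat" where
  "ct X \<equiv> mat_adjoint X"

end

theory Submission
  imports Defs
begin

(*
  For G a {1,2}-inverse of L X R, the product R G L is always a {2}-inverse of X, and it is a
  {1}-inverse as soon as L can be cancelled on the left of X and R on the right of X, i.e. as soon
  as L X U = L X V implies X U = X V and U X R = V X R implies U X = V X.  A {1}-inverse A1 of A
  cancels on the left of A B since A A1 A = A, and A^* cancels since A^* A Y = 0 forces
  (A Y)^* (A Y) = 0, hence A Y = 0; cancellability is stable under products, which covers A A^*.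
  Dually for B1, B^* and B^* B on the right.
*)

lemma mat_adjoint_index [simp]:
  "i < dim_col A \<Longrightarrow> j < dim_row A \<Longrightarrow> mat_adjoint A $$ (i, j) = conjugate (A $$ (j, i))"
  by (simp add: mat_adjoint_def mat_of_rows_def)

lemma mat_adjoint_dim [simp]:
  "dim_row (mat_adjoint A) = dim_col A" "dim_col (mat_adjoint A) = dim_row A"
  by (simp_all add: mat_adjoint_def)

lemma mat_adjoint_mult:
  fixes A B :: "'a :: conjugatable_field mat"
  assumes "A \<in> carrier_mat m n" and "B \<in> carrier_mat n p"
  shows "mat_adjoint (A * B) = mat_adjoint B * mat_adjoint A"
proof -
  have inner: "dim_col A = dim_row B"
    using assms by simp
  show ?thesis
  proof (rule eq_matI)
    fix i j assume "i < dim_row (mat_adjoint B * mat_adjoint A)" "j < dim_col (mat_adjoint B * mat_adjoint A)"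
    then show "mat_adjoint (A * B) $$ (i, j) = (mat_adjoint B * mat_adjoint A) $$ (i, j)"
      using inner by (simp add: scalar_prod_def sum_conjugate conjugate_dist_mul mult.commute)
  qed (use inner in simp_all)
qed

lemma mat_adjoint_mult_self_eq_0:
  fixes Y :: "'a :: conjugatable_ordered_field mat"
  assumes Y: "Y \<in> carrier_mat m n" and eq: "mat_adjoint Y * Y = 0\<^sub>m n n"
  shows "Y = 0\<^sub>m m n"
proof (rule eq_matI)
  fix i j assume i: "i < dim_row (0\<^sub>m m n :: 'a mat)" and j: "j < dim_col (0\<^sub>m m n :: 'a mat)"
  have "col Y j \<bullet>c col Y j = (mat_adjoint Y * Y) $$ (j, j)"
    using Y j by (simp add: mat_adjoint_def conjugate_vec_sprod_comm[of _ m])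
  also have "\<dots> = 0"
    using eq j by simp
  finally have "col Y j = 0\<^sub>v (dim_row Y)"
    using conjugate_square_eq_0_vec[OF col_dim[of Y j]] by blast
  then have "col Y j $ i = 0"
    using Y i by simp
  then show "Y $$ (i, j) = 0\<^sub>m m n $$ (i, j)"
    using Y i j by simp
qed (use Y in simp_all)

lemma mat_adjoint_carrier [simp]:
  "mat_adjoint A \<in> carrier_mat n m \<longleftrightarrow> A \<in> carrier_mat m n"
  unfolding carrier_mat_def by auto

lemma mat_adjoint_adjoint [simp]: "mat_adjoint (mat_adjoint A) = A"
  by (rule eq_matI) simp_all

lemma mat_adjoint_mult_cancel_left:
  fixes A :: "'a :: conjugatable_ordered_field mat"
  assumes A: "A \<in> carrier_mat m n" and E: "E \<in> carrier_mat n k" and F: "F \<in> carrier_mat n k"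
    and eq: "mat_adjoint A * (A * E) = mat_adjoint A * (A * F)"
  shows "A * E = A * F"
proof -
  have D: "E - F \<in> carrier_mat n k"
    using F by (rule minus_carrier_mat)
  define Y where "Y = A * (E - F)"
  have Y: "Y \<in> carrier_mat m k"
    using A D by (simp add: Y_def)
  have Y_eq: "Y = A * E - A * F"
    unfolding Y_def using A E F by (rule mult_minus_distrib_mat)
  have "mat_adjoint A * Y = mat_adjoint A * (A * E) - mat_adjoint A * (A * F)"
    unfolding Y_eq by (rule mult_minus_distrib_mat) (use A E F in auto)
  also have "\<dots> = 0\<^sub>m n k"
    unfolding eq using A F by simp
  finally have "mat_adjoint (E - F) * (mat_adjoint A * Y) = 0\<^sub>m k k"
    using D by (simp add: right_mult_zero_mat)
  moreover have "mat_adjoint Y = mat_adjoint (E - F) * mat_adjoint A"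
    using A D unfolding Y_def by (simp add: mat_adjoint_mult)
  ultimately have "mat_adjoint Y * Y = 0\<^sub>m k k"
    using A D Y by simp
  then have "A * E - A * F = 0\<^sub>m m k"
    using mat_adjoint_mult_self_eq_0[OF Y] by (simp add: Y_eq)
  show ?thesis
  proof (rule eq_matI)
    fix i j assume ij: "i < dim_row (A * F)" "j < dim_col (A * F)"
    have "(A * E) $$ (i, j) - (A * F) $$ (i, j) = (A * E - A * F) $$ (i, j)"
      by (rule index_minus_mat[symmetric]) (use ij in auto)
    also have "\<dots> = 0"
      using \<open>A * E - A * F = 0\<^sub>m m k\<close> ij A F by simp
    finally show "(A * E) $$ (i, j) = (A * F) $$ (i, j)"
      by simp
  qed (use A E F in auto)
qed

lemma mat_adjoint_mult_cancel_right:
  fixes B :: "'a :: conjugatable_ordered_field mat"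
  assumes B: "B \<in> carrier_mat n p" and E: "E \<in> carrier_mat k n" and F: "F \<in> carrier_mat k n"
    and eq: "E * B * mat_adjoint B = F * B * mat_adjoint B"
  shows "E * B = F * B"
proof -
  have adj: "mat_adjoint (X * B * mat_adjoint B) = B * (mat_adjoint B * mat_adjoint X)"
    if "X \<in> carrier_mat k n" for X
  proof -
    have XB: "X * B \<in> carrier_mat k p"
      using that B by simp
    show ?thesis
      unfolding mat_adjoint_mult[OF XB mat_adjoint_carrier[THEN iffD2, OF B]] mat_adjoint_mult[OF that B]
      using B that by simp
  qed
  have "mat_adjoint (mat_adjoint B) * (mat_adjoint B * mat_adjoint E)
      = mat_adjoint (mat_adjoint B) * (mat_adjoint B * mat_adjoint F)"
    using adj[OF E] adj[OF F] eq by simp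
  then have "mat_adjoint B * mat_adjoint E = mat_adjoint B * mat_adjoint F"
    by (rule mat_adjoint_mult_cancel_left[rotated 3]) (use B E F in simp_all)
  then have "mat_adjoint (E * B) = mat_adjoint (F * B)"
    using B E F by (simp add: mat_adjoint_mult)
  then show ?thesis
    by (metis mat_adjoint_adjoint)
qed

lemma mult_assoc_dims:
  fixes A B C :: "'a :: semiring_0 mat"
  assumes "dim_col A = dim_row B" and "dim_col B = dim_row C"
  shows "A * B * C = A * (B * C)"
proof (rule assoc_mult_mat)
  show "A \<in> carrier_mat (dim_row A) (dim_col A)"
    by (rule carrier_matI) simp_all
  show "B \<in> carrier_mat (dim_col A) (dim_col B)"
    by (rule carrier_matI) (simp_all add: assms)
  show "C \<in> carrier_mat (dim_col B) (dim_col C)"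
    by (rule carrier_matI) (simp_all add: assms)
qed

text \<open>\<open>left_cancellable L X\<close> says that the null space of \<open>L\<close> meets the range of \<open>X\<close> trivially,
  i.e. \<open>r(L X) = r(X)\<close>; dually \<open>right_cancellable R X\<close> says \<open>r(X R) = r(X)\<close>.  The carrier conditions
  are needed because products of matrices of mismatched dimensions are junk.\<close>

definition left_cancellable :: "'a :: semiring_0 mat \<Rightarrow> 'a mat \<Rightarrow> bool" where
  "left_cancellable L X \<longleftrightarrow>
    (\<forall>k U V. U \<in> carrier_mat (dim_col X) k \<longrightarrow> V \<in> carrier_mat (dim_col X) k \<longrightarrow>
      L * (X * U) = L * (X * V) \<longrightarrow> X * U = X * V)"

definition right_cancellable :: "'a :: semiring_0 mat \<Rightarrow> 'a mat \<Rightarrow> bool" where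
  "right_cancellable R X \<longleftrightarrow>
    (\<forall>k U V. U \<in> carrier_mat k (dim_row X) \<longrightarrow> V \<in> carrier_mat k (dim_row X) \<longrightarrow>
      U * X * R = V * X * R \<longrightarrow> U * X = V * X)"

lemma left_cancellableD:
  "left_cancellable L X \<Longrightarrow> U \<in> carrier_mat (dim_col X) k \<Longrightarrow> V \<in> carrier_mat (dim_col X) k
    \<Longrightarrow> L * (X * U) = L * (X * V) \<Longrightarrow> X * U = X * V"
  unfolding left_cancellable_def by blast

lemma right_cancellableD:
  "right_cancellable R X \<Longrightarrow> U \<in> carrier_mat k (dim_row X) \<Longrightarrow> V \<in> carrier_mat k (dim_row X)
    \<Longrightarrow> U * X * R = V * X * R \<Longrightarrow> U * X = V * X"
  unfolding right_cancellable_def by blast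

lemma left_cancellable_ginv:
  fixes A :: "'a :: semiring_0 mat"
  assumes A: "A \<in> carrier_mat m n" and A1: "A1 \<in> carrier_mat n m" and AA1A: "A * A1 * A = A"
    and Y: "Y \<in> carrier_mat n p"
  shows "left_cancellable A1 (A * Y)"
  unfolding left_cancellable_def
proof (intro allI impI)
  note [simp] = carrier_matD[OF A] carrier_matD[OF A1] carrier_matD[OF Y]
  fix k U V assume U: "U \<in> carrier_mat (dim_col (A * Y)) k" and V: "V \<in> carrier_mat (dim_col (A * Y)) k"
    and eq: "A1 * (A * Y * U) = A1 * (A * Y * V)"
  note [simp] = carrier_matD[OF U] carrier_matD[OF V]
  have cancel: "A * (A1 * (A * Z)) = A * Z" if "dim_row Z = n" for Z
  proof -
    have "A * (A1 * (A * Z)) = A * A1 * A * Z"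
      using that by (simp add: mult_assoc_dims)
    also have "\<dots> = A * Z"
      by (simp only: AA1A)
    finally show ?thesis .
  qed
  have "A * Y * U = A * (A1 * (A * (Y * U)))"
    using cancel[of "Y * U"] by (simp add: mult_assoc_dims)
  also have "\<dots> = A * (A1 * (A * (Y * V)))"
    using eq by (simp add: mult_assoc_dims)
  also have "\<dots> = A * Y * V"
    using cancel[of "Y * V"] by (simp add: mult_assoc_dims)
  finally show "A * Y * U = A * Y * V" .
qed

lemma left_cancellable_adjoint:
  fixes A :: "'a :: conjugatable_ordered_field mat"
  assumes A: "A \<in> carrier_mat m n" and Y: "Y \<in> carrier_mat n p"
  shows "left_cancellable (mat_adjoint A) (A * Y)"
  unfolding left_cancellable_def
proof (intro allI impI)
  fix k U V assume U: "U \<in> carrier_mat (dim_col (A * Y)) k" and V: "V \<in> carrier_mat (dim_col (A * Y)) k"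
    and eq: "mat_adjoint A * (A * Y * U) = mat_adjoint A * (A * Y * V)"
  have YU: "Y * U \<in> carrier_mat n k" and YV: "Y * V \<in> carrier_mat n k"
    using Y U V by auto
  have "A * (Y * U) = A * (Y * V)"
    by (rule mat_adjoint_mult_cancel_left[OF A YU YV]) (use A Y U V eq in simp)
  then show "A * Y * U = A * Y * V"
    using A Y U V by simp
qed

lemma left_cancellable_mult:
  assumes L1: "L1 \<in> carrier_mat l m" and L2: "L2 \<in> carrier_mat j l" and X: "X \<in> carrier_mat m n"
    and canc1: "left_cancellable L1 X" and canc2: "left_cancellable L2 (L1 * X)"
  shows "left_cancellable (L2 * L1) X"
  unfolding left_cancellable_def
proof (intro allI impI)
  note [simp] = carrier_matD[OF L1] carrier_matD[OF L2] carrier_matD[OF X]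
  fix k U V assume U: "U \<in> carrier_mat (dim_col X) k" and V: "V \<in> carrier_mat (dim_col X) k"
    and eq: "L2 * L1 * (X * U) = L2 * L1 * (X * V)"
  note [simp] = carrier_matD[OF U] carrier_matD[OF V]
  have "L1 * X * U = L1 * X * V"
    by (rule left_cancellableD[OF canc2]) (use U V eq in \<open>simp_all add: mult_assoc_dims\<close>)
  then show "X * U = X * V"
    by (intro left_cancellableD[OF canc1 U V]) (simp add: mult_assoc_dims)
qed

lemma left_cancellable_mult_adjoint:
  fixes A :: "'a :: conjugatable_ordered_field mat"
  assumes A: "A \<in> carrier_mat m n" and Y: "Y \<in> carrier_mat n p"
  shows "left_cancellable (A * mat_adjoint A) (A * Y)"
proof (rule left_cancellable_mult[where l = n and m = m and n = p])
  show "left_cancellable A (mat_adjoint A * (A * Y))"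
    using left_cancellable_adjoint[of "mat_adjoint A" n m "A * Y" p] A Y by simp
qed (use assms left_cancellable_adjoint[OF A Y] in simp_all)

lemma right_cancellable_ginv:
  fixes B :: "'a :: semiring_0 mat"
  assumes B: "B \<in> carrier_mat n p" and B1: "B1 \<in> carrier_mat p n" and BB1B: "B * B1 * B = B"
    and Y: "Y \<in> carrier_mat m n"
  shows "right_cancellable B1 (Y * B)"
  unfolding right_cancellable_def
proof (intro allI impI)
  note [simp] = carrier_matD[OF B] carrier_matD[OF B1] carrier_matD[OF Y]
  fix k U V assume U: "U \<in> carrier_mat k (dim_row (Y * B))" and V: "V \<in> carrier_mat k (dim_row (Y * B))"
    and eq: "U * (Y * B) * B1 = V * (Y * B) * B1"
  note [simp] = carrier_matD[OF U] carrier_matD[OF V]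
  have BB1B': "B * (B1 * B) = B"
    using BB1B by (simp add: mult_assoc_dims)
  have "U * (Y * B) = U * (Y * B) * B1 * B"
    by (simp add: mult_assoc_dims BB1B')
  also have "\<dots> = V * (Y * B) * B1 * B"
    by (simp only: eq)
  also have "\<dots> = V * (Y * B)"
    by (simp add: mult_assoc_dims BB1B')
  finally show "U * (Y * B) = V * (Y * B)" .
qed

lemma right_cancellable_adjoint:
  fixes B :: "'a :: conjugatable_ordered_field mat"
  assumes B: "B \<in> carrier_mat n p" and Y: "Y \<in> carrier_mat m n"
  shows "right_cancellable (mat_adjoint B) (Y * B)"
  unfolding right_cancellable_def
proof (intro allI impI)
  fix k U V assume U: "U \<in> carrier_mat k (dim_row (Y * B))" and V: "V \<in> carrier_mat k (dim_row (Y * B))"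
    and eq: "U * (Y * B) * mat_adjoint B = V * (Y * B) * mat_adjoint B"
  have UY: "U * Y \<in> carrier_mat k n" and VY: "V * Y \<in> carrier_mat k n"
    using Y U V by auto
  have "U * Y * B = V * Y * B"
    by (rule mat_adjoint_mult_cancel_right[OF B UY VY]) (use B Y U V eq in simp)
  then show "U * (Y * B) = V * (Y * B)"
    using B Y U V by simp
qed

lemma right_cancellable_mult:
  assumes R1: "R1 \<in> carrier_mat n q" and R2: "R2 \<in> carrier_mat q r" and X: "X \<in> carrier_mat m n"
    and canc1: "right_cancellable R1 X" and canc2: "right_cancellable R2 (X * R1)"
  shows "right_cancellable (R1 * R2) X"
  unfolding right_cancellable_def
proof (intro allI impI)
  note [simp] = carrier_matD[OF R1] carrier_matD[OF R2] carrier_matD[OF X]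
  fix k U V assume U: "U \<in> carrier_mat k (dim_row X)" and V: "V \<in> carrier_mat k (dim_row X)"
    and eq: "U * X * (R1 * R2) = V * X * (R1 * R2)"
  note [simp] = carrier_matD[OF U] carrier_matD[OF V]
  have "U * (X * R1) = V * (X * R1)"
    by (rule right_cancellableD[OF canc2]) (use U V eq in \<open>simp_all add: mult_assoc_dims\<close>)
  then show "U * X = V * X"
    by (intro right_cancellableD[OF canc1 U V]) (simp add: mult_assoc_dims)
qed

lemma right_cancellable_mult_left:
  assumes L: "L \<in> carrier_mat l m" and X: "X \<in> carrier_mat m n" and R: "R \<in> carrier_mat n q"
    and canc: "right_cancellable R X"
  shows "right_cancellable R (L * X)"
  unfolding right_cancellable_def
proof (intro allI impI)
  note [simp] = carrier_matD[OF L] carrier_matD[OF X] carrier_matD[OF R]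
  fix k U V assume U: "U \<in> carrier_mat k (dim_row (L * X))" and V: "V \<in> carrier_mat k (dim_row (L * X))"
    and eq: "U * (L * X) * R = V * (L * X) * R"
  note [simp] = carrier_matD[OF U] carrier_matD[OF V]
  have "U * L * X = V * L * X"
    by (rule right_cancellableD[OF canc, where k = k]) (use U V L eq in \<open>simp_all add: mult_assoc_dims\<close>)
  then show "U * (L * X) = V * (L * X)"
    by (simp add: mult_assoc_dims)
qed

lemma right_cancellable_adjoint_mult:
  fixes B :: "'a :: conjugatable_ordered_field mat"
  assumes B: "B \<in> carrier_mat n p" and Y: "Y \<in> carrier_mat m n"
  shows "right_cancellable (mat_adjoint B * B) (Y * B)"
proof (rule right_cancellable_mult[of _ p n _ p _ m])
  show "right_cancellable B (Y * B * mat_adjoint B)"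
    using right_cancellable_adjoint[of "mat_adjoint B" p n "Y * B" m] B Y by simp
qed (use assms right_cancellable_adjoint[OF B Y] in simp_all)

lemma gi12_carrier: "X \<in> carrier_mat m n \<Longrightarrow> G \<in> gi12 X \<Longrightarrow> G \<in> carrier_mat n m"
  by (simp add: gi12_def)

lemma gi12_mult_left:
  assumes L: "L \<in> carrier_mat l m" and X: "X \<in> carrier_mat m n"
    and canc: "left_cancellable L X" and G: "G \<in> gi12 (L * X)"
  shows "G * L \<in> gi12 X"
proof -
  have Gc: "G \<in> carrier_mat n l"
    using gi12_carrier[OF _ G] L X by simp
  have G1: "L * X * G * (L * X) = L * X" and G2: "G * (L * X) * G = G"
    using G by (simp_all add: gi12_def)
  note [simp] = carrier_matD[OF L] carrier_matD[OF X] carrier_matD[OF Gc]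
  have "X * (G * L * X) = X * 1\<^sub>m n"
    by (rule left_cancellableD[OF canc, where k = n]) (use G1 Gc L X in \<open>simp_all add: mult_assoc_dims\<close>)
  then have "X * (G * L) * X = X"
    by (simp add: mult_assoc_dims)
  moreover have "G * L * X * (G * L) = G * L"
  proof -
    have "G * L * X * (G * L) = G * (L * X) * G * L"
      by (simp add: mult_assoc_dims)
    then show ?thesis
      by (simp only: G2)
  qed
  ultimately show ?thesis
    using Gc L unfolding gi12_def by simp
qed

lemma gi12_mult_right:
  assumes X: "X \<in> carrier_mat m n" and R: "R \<in> carrier_mat n q"
    and canc: "right_cancellable R X" and G: "G \<in> gi12 (X * R)"
  shows "R * G \<in> gi12 X"
proof -
  have Gc: "G \<in> carrier_mat q m"
    using gi12_carrier[OF _ G] R X by simp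
  have G1: "X * R * G * (X * R) = X * R" and G2: "G * (X * R) * G = G"
    using G by (simp_all add: gi12_def)
  note [simp] = carrier_matD[OF R] carrier_matD[OF X] carrier_matD[OF Gc]
  have "X * R * G * X = 1\<^sub>m m * X"
    by (rule right_cancellableD[OF canc, where k = m]) (use G1 Gc R X in \<open>simp_all add: mult_assoc_dims\<close>)
  then have "X * (R * G) * X = X"
    by (simp add: mult_assoc_dims)
  moreover have "R * G * X * (R * G) = R * G"
    using G2 by (simp add: mult_assoc_dims)
  ultimately show ?thesis
    using Gc R unfolding gi12_def by simp
qed

lemma gi12_mult_both:
  assumes L: "L \<in> carrier_mat l m" and X: "X \<in> carrier_mat m n" and R: "R \<in> carrier_mat n q"
    and lcanc: "left_cancellable L X" and rcanc: "right_cancellable R X"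
    and G: "G \<in> gi12 (L * X * R)"
  shows "R * G * L \<in> gi12 X"
proof (rule gi12_mult_left[OF L X lcanc])
  show "R * G \<in> gi12 (L * X)"
    using gi12_mult_right[where m = l, OF _ R right_cancellable_mult_left[OF L X R rcanc] G] L X by simp
qed

context
  fixes A B :: "complex mat" and m n p :: nat
  assumes A: "A \<in> carrier_mat m n" and B: "B \<in> carrier_mat n p"
begin

private lemma dims: "dim_row A = m" "dim_col A = n" "dim_row B = n" "dim_col B = p"
  using A B by simp_all

private lemma AB: "A * B \<in> carrier_mat m p"
  using A B by simp

lemma gi12_factor_left:
  assumes L: "L \<in> carrier_mat l m" and canc: "left_cancellable L (A * B)" and G: "G \<in> gi12 (L * A * B)"
  shows "G * L \<in> gi12 (A * B)"
  using gi12_mult_left[OF L AB canc] G assoc_mult_mat[OF L A B] by simp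

lemma gi12_factor_right:
  assumes "R \<in> carrier_mat p q" and "right_cancellable R (A * B)" and "G \<in> gi12 (A * B * R)"
  shows "R * G \<in> gi12 (A * B)"
  using gi12_mult_right[OF AB assms] .

lemma gi12_factors:
  assumes L: "L \<in> carrier_mat l m" and R: "R \<in> carrier_mat p q"
    and lcanc: "left_cancellable L (A * B)" and rcanc: "right_cancellable R (A * B)"
    and G: "G \<in> gi12 (L * A * B * R)"
  shows "R * G * L \<in> gi12 (A * B)"
  using gi12_mult_both[OF L AB R lcanc rcanc] G assoc_mult_mat[OF L A B] by simp

lemma left_cancellable_gi12:
  assumes "A1 \<in> gi12 A"
  shows "A1 \<in> carrier_mat n m" and "left_cancellable A1 (A * B)"
  using gi12_carrier[OF A assms] left_cancellable_ginv[OF A _ _ B, of A1] assms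
  by (simp_all add: gi12_def)

lemma right_cancellable_gi12:
  assumes "B1 \<in> gi12 B"
  shows "B1 \<in> carrier_mat p n" and "right_cancellable B1 (A * B)"
  using gi12_carrier[OF B assms] right_cancellable_ginv[OF B _ _ A, of B1] assms
  by (simp_all add: gi12_def)

lemma gi12_ginv_factor_left:
  "A1 \<in> gi12 A \<Longrightarrow> G \<in> gi12 (A1 * A * B) \<Longrightarrow> G * A1 \<in> gi12 (A * B)"
  using gi12_factor_left left_cancellable_gi12 by blast

lemma gi12_ginv_factor_right:
  "B1 \<in> gi12 B \<Longrightarrow> G \<in> gi12 (A * B * B1) \<Longrightarrow> B1 * G \<in> gi12 (A * B)"
  using gi12_factor_right right_cancellable_gi12 by blast

lemma gi12_ginv_factors:
  "A1 \<in> gi12 A \<Longrightarrow> B1 \<in> gi12 B \<Longrightarrow> G \<in> gi12 (A1 * A * B * B1) \<Longrightarrow> B1 * G * A1 \<in> gi12 (A * B)"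
  using gi12_factors left_cancellable_gi12 right_cancellable_gi12 by blast

lemma gi12_adjoint_factor_left: "G \<in> gi12 (ct A * A * B) \<Longrightarrow> G * ct A \<in> gi12 (A * B)"
  using gi12_factor_left[OF _ left_cancellable_adjoint[OF A B]] A by simp

lemma gi12_adjoint_factor_right: "G \<in> gi12 (A * B * ct B) \<Longrightarrow> ct B * G \<in> gi12 (A * B)"
  using gi12_factor_right[OF _ right_cancellable_adjoint[OF B A]] B by simp

lemma gi12_adjoint_factors: "G \<in> gi12 (ct A * A * B * ct B) \<Longrightarrow> ct B * G * ct A \<in> gi12 (A * B)"
  using gi12_factors[OF _ _ left_cancellable_adjoint[OF A B] right_cancellable_adjoint[OF B A]] A B
  by simp

lemma gi12_gram_factor_left:
  assumes G: "G \<in> gi12 (A * ct A * A * B)"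
  shows "G * A * ct A \<in> gi12 (A * B)"
proof -
  have "G \<in> carrier_mat p m"
    using G by (simp add: gi12_def dims)
  then show ?thesis
    using gi12_factor_left[where l = m, OF _ left_cancellable_mult_adjoint[OF A B] G] A
    by (simp add: mult_assoc_dims dims)
qed

lemma gi12_gram_factor_right: "G \<in> gi12 (A * B * ct B * B) \<Longrightarrow> ct B * B * G \<in> gi12 (A * B)"
  using gi12_factor_right[where q = p, OF _ right_cancellable_adjoint_mult[OF B A]] B
  by (simp add: mult_assoc_dims dims)

lemma gi12_gram_factors:
  assumes G: "G \<in> gi12 (A * ct A * A * B * ct B * B)"
  shows "ct B * B * G * A * ct A \<in> gi12 (A * B)"
proof -
  have "G \<in> carrier_mat p m"
    using G by (simp add: gi12_def dims)
  moreover have "ct B * B * G * (A * ct A) \<in> gi12 (A * B)"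
    using gi12_factors[where l = m and q = p, OF _ _ left_cancellable_mult_adjoint[OF A B]
        right_cancellable_adjoint_mult[OF B A]] G A B
    by (simp add: mult_assoc_dims dims)
  ultimately show ?thesis
    by (simp add: mult_assoc_dims dims)
qed

end

theorem theorem3p1:
  fixes A B :: "complex mat" and m n p :: nat
  assumes "A \<in> carrier_mat m n" and "B \<in> carrier_mat n p"
  shows
   "({G * A1 | A1 G. A1 \<in> gi12 A \<and> G \<in> gi12 (A1 * A * B)} \<subseteq> gi12 (A * B))
    \<and> ({B1 * G | B1 G. B1 \<in> gi12 B \<and> G \<in> gi12 (A * B * B1)} \<subseteq> gi12 (A * B))
    \<and> ({G * ct A | G. G \<in> gi12 (ct A * A * B)} \<subseteq> gi12 (A * B))
    \<and> ({ct B * G | G. G \<in> gi12 (A * B * ct B)} \<subseteq> gi12 (A * B))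
    \<and> ({G * A * ct A | G. G \<in> gi12 (A * ct A * A * B)} \<subseteq> gi12 (A * B))
    \<and> ({ct B * B * G | G. G \<in> gi12 (A * B * ct B * B)} \<subseteq> gi12 (A * B))
    \<and> ({B1 * G * A1 | A1 B1 G. A1 \<in> gi12 A \<and> B1 \<in> gi12 B \<and> G \<in> gi12 (A1 * A * B * B1)}
      \<subseteq> gi12 (A * B))
    \<and> ({ct B * G * ct A | G. G \<in> gi12 (ct A * A * B * ct B)} \<subseteq> gi12 (A * B))
    \<and> ({ct B * B * G * A * ct A | G. G \<in> gi12 (A * ct A * A * B * ct B * B)} \<subseteq> gi12 (A * B))"
  using gi12_ginv_factor_left[OF assms] gi12_ginv_factor_right[OF assms]
    gi12_adjoint_factor_left[OF assms] gi12_adjoint_factor_right[OF assms]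
    gi12_gram_factor_left[OF assms] gi12_gram_factor_right[OF assms]
    gi12_ginv_factors[OF assms] gi12_adjoint_factors[OF assms] gi12_gram_factors[OF assms]
  by blast

end
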